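(* Define $U:[0,\infty)\to\mathbb{R}$ by $U(r)=\lim_{n\to\infty}\sqrt{1+\sqrt{1+\dots+\sqrt{1+r^{2^n}}}}$ ($n$ nested roots; the $n=0$ term is $r$). Then $U$ restricted to $[1,\infty)$ is a continuous, unbounded map $[1,\infty)\to[U(1),\infty)$ that admits an inverse function.
   Context: The limit defining $U(r)$ exists for every $r\ge0$. The setting is constructive mathematics. *)

theory Defs
  imports "HOL-Analysis.Analysis"
begin

fun nested_root :: "nat \<Rightarrow> real \<Rightarrow> real" where
  "nested_root 0 x = x"
| "nested_root (Suc n) x = sqrt (1 + nested_root n x)"

definition U :: "real \<Rightarrow> real" where
  "U r = lim (\<lambda>n. nested_root n (r ^ (2 ^ n)))"

end

theory Submission
  imports Defs
begin

text \<open>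
  The approximants U_n(r) = nested_root n (r^(2^n)) satisfy U_0(r) = r and
  U_(n+1)(r) = sqrt (1 + U_n(r^2)). For r \<ge> 1 they increase and stay in [r, r + 1],
  so U(r) exists, r \<le> U(r) \<le> r + 1, and U(r)^2 = 1 + U(r^2). Since sqrt (1 + _) is
  1/2-Lipschitz on [0, \<infinity>), |U_n - U| \<le> 2^-n uniformly on [1, \<infinity>), whence continuity.
  If U(r) = U(s) with 1 \<le> r < s, iterating the functional equation gives
  U(r^(2^k)) = U(s^(2^k)), although s^(2^k) - r^(2^k) \<ge> 2^k (s - r) eventually exceeds 1,
  contradicting r \<le> U(r) \<le> r + 1. Hence U is strictly increasing, and by the intermediate
  value theorem and U(r) \<ge> r it maps [1, \<infinity>) onto [U(1), \<infinity>).
\<close>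

lemma nested_root_mono: "x \<le> z \<Longrightarrow> nested_root n x \<le> nested_root n z"
  by (induction n) auto

lemma continuous_on_nested_root: "continuous_on S (nested_root n)"
  by (induction n) (auto intro!: continuous_intros)

lemma sqrt_one_plus_dist:
  fixes x z :: real
  assumes "0 \<le> x" "0 \<le> z"
  shows "\<bar>sqrt (1 + x) - sqrt (1 + z)\<bar> \<le> \<bar>x - z\<bar> / 2"
proof -
  let ?d = "sqrt (1 + x) - sqrt (1 + z)" and ?s = "sqrt (1 + x) + sqrt (1 + z)"
  have prod: "?d * ?s = x - z" using assms by (simp add: algebra_simps)
  have "2 \<le> ?s" using assms by (smt (verit) real_sqrt_ge_one)
  then have "\<bar>?d\<bar> * 2 \<le> \<bar>x - z\<bar>"
    by (simp add: abs_mult mult_left_mono flip: prod)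
  then show ?thesis by simp
qed

lemma power_diff_ge:
  fixes r s :: real
  assumes "1 \<le> r" "r \<le> s"
  shows "real n * (s - r) \<le> s ^ n - r ^ n"
proof (cases n)
  case (Suc m)
  have term_ge_1: "1 * 1 \<le> s ^ p * r ^ (m - p)" for p
    using assms by (intro mult_mono one_le_power) auto
  have "real n = (\<Sum>p<Suc m. 1)" using Suc by simp
  also have "\<dots> \<le> (\<Sum>p<Suc m. s ^ p * r ^ (m - p))"
    using term_ge_1 by (intro sum_mono) simp
  finally have "real n \<le> (\<Sum>p<Suc m. s ^ p * r ^ (m - p))" .
  then show ?thesis
    using assms Suc
    by (simp only: diff_power_eq_sum mult.commute[of "s - r"]) (simp add: mult_right_mono)
qed simp

definition U_approx :: "nat \<Rightarrow> real \<Rightarrow> real" where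
  "U_approx n r = nested_root n (r ^ 2 ^ n)"

lemma U_approx_0 [simp]: "U_approx 0 r = r"
  by (simp add: U_approx_def)

lemma U_approx_Suc: "U_approx (Suc n) r = sqrt (1 + U_approx n (r\<^sup>2))"
  by (simp add: U_approx_def power_mult[symmetric] mult.commute)

lemma U_approx_ge: "0 \<le> r \<Longrightarrow> r \<le> U_approx n r"
proof (induction n arbitrary: r)
  case (Suc n)
  have "sqrt (r\<^sup>2) \<le> sqrt (1 + U_approx n (r\<^sup>2))"
    using Suc.IH[of "r\<^sup>2"] by (intro real_sqrt_le_mono) simp
  then show ?case using Suc.prems by (simp add: U_approx_Suc)
qed simp

lemma U_approx_le: "1 \<le> r \<Longrightarrow> U_approx n r \<le> r + 1"
proof (induction n arbitrary: r)
  case (Suc n)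
  have "U_approx n (r\<^sup>2) \<le> r\<^sup>2 + 1"
    using Suc.IH[of "r\<^sup>2"] Suc.prems by (simp add: one_le_power)
  then have "sqrt (1 + U_approx n (r\<^sup>2)) \<le> sqrt ((r + 1)\<^sup>2)"
    using Suc.prems by (simp add: power2_eq_square algebra_simps)
  then show ?case using Suc.prems by (simp add: U_approx_Suc)
qed simp

lemma incseq_U_approx: "incseq (\<lambda>n. U_approx n r)"
proof (rule incseq_SucI)
  show "U_approx n r \<le> U_approx (Suc n) r" for n
  proof (induction n arbitrary: r)
    case 0
    show ?case using real_sqrt_sum_squares_ge1[of r 1] by (simp add: U_approx_Suc add.commute)
  next
    case (Suc n)
    show ?case
      unfolding U_approx_Suc[of "Suc n" r] U_approx_Suc[of n r]
      using Suc.IH[of "r\<^sup>2"] by simp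
  qed
qed

lemma U_approx_mono: "0 \<le> r \<Longrightarrow> r \<le> s \<Longrightarrow> U_approx n r \<le> U_approx n s"
  unfolding U_approx_def by (intro nested_root_mono power_mono)

lemma continuous_on_U_approx: "continuous_on S (U_approx n)"
  unfolding U_approx_def
  by (rule continuous_on_compose2[OF continuous_on_nested_root[of UNIV]])
    (auto intro!: continuous_intros)

lemma U_approx_LIMSEQ:
  assumes "1 \<le> r"
  shows "(\<lambda>n. U_approx n r) \<longlonglongrightarrow> U r"
proof -
  obtain L where "(\<lambda>n. U_approx n r) \<longlonglongrightarrow> L"
    using incseq_convergent[OF incseq_U_approx] U_approx_le[OF assms] by blast
  moreover have "U r = lim (\<lambda>n. U_approx n r)"
    unfolding U_def U_approx_def ..
  ultimately show ?thesis by (simp add: limI)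
qed

lemma U_ge:
  assumes "1 \<le> r"
  shows "r \<le> U r"
  using U_approx_LIMSEQ[OF assms] by (rule tendsto_lowerbound) (use assms U_approx_ge in simp_all)

lemma U_le:
  assumes "1 \<le> r"
  shows "U r \<le> r + 1"
  using U_approx_LIMSEQ[OF assms] by (rule tendsto_upperbound) (use assms U_approx_le in simp_all)

lemma U_mono:
  assumes "1 \<le> r" "r \<le> s"
  shows "U r \<le> U s"
  by (rule tendsto_le[OF _ U_approx_LIMSEQ[of s] U_approx_LIMSEQ[OF assms(1)]])
    (use assms U_approx_mono in simp_all)

lemma U_eq_sqrt:
  assumes "1 \<le> r"
  shows "U r = sqrt (1 + U (r\<^sup>2))"
proof (rule LIMSEQ_unique)
  show "(\<lambda>n. U_approx (Suc n) r) \<longlonglongrightarrow> U r"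
    using U_approx_LIMSEQ[OF assms] by (rule LIMSEQ_Suc)
  show "(\<lambda>n. U_approx (Suc n) r) \<longlonglongrightarrow> sqrt (1 + U (r\<^sup>2))"
    unfolding U_approx_Suc using assms by (intro tendsto_intros U_approx_LIMSEQ one_le_power)
qed

lemma U_square:
  assumes "1 \<le> r"
  shows "U (r\<^sup>2) = (U r)\<^sup>2 - 1"
proof -
  have "1 \<le> r\<^sup>2" using assms by (simp add: one_le_power)
  then have "1 \<le> U (r\<^sup>2)" using U_ge[of "r\<^sup>2"] by simp
  then show ?thesis by (simp add: U_eq_sqrt[OF assms])
qed

lemma U_approx_dist:
  assumes "1 \<le> r"
  shows "\<bar>U_approx n r - U r\<bar> \<le> (1 / 2) ^ n"
  using assms
proof (induction n arbitrary: r)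
  case 0
  then show ?case using U_ge[of r] U_le[of r] by simp
next
  case (Suc n)
  have r2: "1 \<le> r\<^sup>2" using Suc.prems by (simp add: one_le_power)
  have "\<bar>U_approx (Suc n) r - U r\<bar> = \<bar>sqrt (1 + U_approx n (r\<^sup>2)) - sqrt (1 + U (r\<^sup>2))\<bar>"
    by (simp add: U_approx_Suc U_eq_sqrt[OF Suc.prems])
  also have "\<dots> \<le> \<bar>U_approx n (r\<^sup>2) - U (r\<^sup>2)\<bar> / 2"
    using U_approx_ge[of "r\<^sup>2" n] U_ge[OF r2] r2 by (intro sqrt_one_plus_dist) auto
  also have "\<dots> \<le> (1 / 2) ^ Suc n"
    using Suc.IH[OF r2] by simp
  finally show ?case .
qed

lemma uniform_limit_U_approx: "uniform_limit {1..} U_approx U sequentially"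
proof (rule metric_uniform_limit_imp_uniform_limit)
  show "uniform_limit {1..} (\<lambda>n _. (1 / 2) ^ n) (\<lambda>_. 0 :: real) sequentially"
    by (rule uniform_limitI) (use LIMSEQ_power_zero[of "1 / 2 :: real"] in \<open>auto dest: tendstoD\<close>)
  show "\<forall>\<^sub>F n in sequentially. \<forall>r\<in>{1..}. dist (U_approx n r) (U r) \<le> dist ((1 / 2 :: real) ^ n) 0"
    by (simp add: dist_real_def U_approx_dist)
qed

lemma continuous_on_U: "continuous_on {1..} U"
  by (rule uniform_limit_theorem[OF _ uniform_limit_U_approx])
    (simp_all add: continuous_on_U_approx)

lemma U_power2_eq:
  assumes "1 \<le> r" "1 \<le> s" "U r = U s"
  shows "U (r ^ 2 ^ k) = U (s ^ 2 ^ k)"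
  using assms
proof (induction k arbitrary: r s)
  case (Suc k)
  have "1 \<le> r\<^sup>2" "1 \<le> s\<^sup>2"
    using Suc.prems by (simp_all add: one_le_power)
  moreover have "U (r\<^sup>2) = U (s\<^sup>2)"
    using Suc.prems by (simp add: U_square)
  ultimately have "U ((r\<^sup>2) ^ 2 ^ k) = U ((s\<^sup>2) ^ 2 ^ k)"
    by (rule Suc.IH)
  then show ?case by (simp add: power_mult[symmetric] mult.commute)
qed simp

lemma U_less:
  assumes "1 \<le> r" "r < s"
  shows "U r < U s"
proof -
  have "U r \<noteq> U s"
  proof
    assume eq: "U r = U s"
    obtain k where "1 / (s - r) < 2 ^ k"
      using real_arch_pow[of 2 "1 / (s - r)"] by auto
    then have "1 < 2 ^ k * (s - r)"
      using assms by (simp add: divide_less_eq)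
    also have "\<dots> \<le> s ^ 2 ^ k - r ^ 2 ^ k"
      using power_diff_ge[of r s "2 ^ k"] assms by simp
    finally have gap: "1 < s ^ 2 ^ k - r ^ 2 ^ k" .
    have "U (r ^ 2 ^ k) = U (s ^ 2 ^ k)"
      using U_power2_eq[of r s k] assms eq by simp
    moreover have "s ^ 2 ^ k \<le> U (s ^ 2 ^ k)" "U (r ^ 2 ^ k) \<le> r ^ 2 ^ k + 1"
      using assms by (simp_all add: U_ge U_le one_le_power)
    ultimately show False using gap by linarith
  qed
  then show ?thesis using U_mono[of r s] assms by simp
qed

lemma U_image: "U ` {1..} = {U 1..}"
proof
  show "U ` {1..} \<subseteq> {U 1..}" using U_mono by auto
  show "{U 1..} \<subseteq> U ` {1..}"
  proof
    fix y assume y: "y \<in> {U 1..}"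
    then have "1 \<le> y" using U_ge[of 1] by simp
    then have "\<exists>x. 1 \<le> x \<and> x \<le> y \<and> U x = y"
      using y U_ge[of y] by (intro IVT' continuous_on_subset[OF continuous_on_U]) auto
    then show "y \<in> U ` {1..}" by auto
  qed
qed

theorem corollary9p1:
  shows "continuous_on {1..} U
    \<and> \<not> bounded (U ` {1..})
    \<and> bij_betw U {1..} {U 1..}"
proof (intro conjI)
  show "continuous_on {1..} U" by (rule continuous_on_U)
  show "\<not> bounded (U ` {1..})"
  proof
    assume "bounded (U ` {1..})"
    then have "bdd_above {U 1..}" by (simp add: U_image bounded_imp_bdd_above)
    then obtain M where "\<And>x. U 1 \<le> x \<Longrightarrow> x \<le> M" by (auto simp: bdd_above_def)
    from this[of "max (U 1) M + 1"] show False
      using max.cobounded1[of "U 1" M] max.cobounded2[of M "U 1"] by linarith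
  qed
  have "strict_mono_on {1..} U" by (rule strict_mono_onI) (simp add: U_less)
  then show "bij_betw U {1..} {U 1..}"
    by (simp add: bij_betw_def strict_mono_on_imp_inj_on U_image)
qed

end
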